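(* Let $S=K[x_1,\dots,x_n]$ with $K$ a field or $\mathbb{Z}$, let $I\subseteq S$ be a monomial ideal, and let $C_\bullet$ be a minimal free resolution of $S/I$ whose free modules are given $\mathbb{N}^n$-homogeneous bases (so all matrices are $\mathbb{N}^n$-graded). If $Z$ is a subset of the variables and $T=S/(Z)$, then the pruning $P(C_\bullet,Z)$ is a minimal free resolution of $S/I\otimes_S T$ as a $T$-module.
   Context: Pruning. Let $C_\bullet$ be a sequence of free $S$-modules with chosen bases $F_t\xrightarrow{A_t}F_{t-1}\to\cdots\to F_1\xrightarrow{A_1}F_0$, so each map is a matrix $A_i$ (columns indexed by the basis of $F_i$, rows by the basis of $F_{i-1}$). The pruning $P(C_\bullet,Z)$ is obtained by the following procedure: for $i=1,2,\dots,t$ in turn, replace the current matrix $A_i$ by the matrix obtained by setting every variable of $Z$ equal to $0$; let $U$ be the set of columns of this new $A_i$ that are identically zero; then delete from $F_i$ the basis elements indexed by $U$, delete from $A_i$ the columns indexed by $U$, and delete from $A_{i+1}$ (if $i<t$) the rows indexed by $U$. The resulting sequence of matrices and (shrunken) free modules is regarded as a sequence of free $T$-modules and maps, $T=S/(Z)$. *)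

theory Defs
  imports Main "HOL-Library.Poly_Mapping"
begin

text \<open>A free module with a chosen basis indexed by a finite set B of naturals is
  modelled as vectors nat \<Rightarrow> S supported on B; a map F_i \<rightarrow> F_(i-1) is a matrix
  M row col (rows indexed by the basis of F_(i-1), columns by that of F_i).\<close>

type_synonym ('v, 'k) mpoly = "('v \<Rightarrow>\<^sub>0 nat) \<Rightarrow>\<^sub>0 'k"

definition setZ :: "'v set \<Rightarrow> ('v, 'k::zero) mpoly \<Rightarrow> ('v, 'k) mpoly" where
  "setZ Z f = Abs_poly_mapping (\<lambda>a. if (\<forall>z\<in>Z. Poly_Mapping.lookup a z = 0) then Poly_Mapping.lookup f a else 0)"

text \<open>The ring T = S/(Z), realised as the subring of polynomials not involving Z.\<close>
definition polyT :: "'v set \<Rightarrow> ('v, 'k::zero) mpoly set" where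
  "polyT Z = {f. \<forall>a\<in>Poly_Mapping.keys f. \<forall>z\<in>Z. Poly_Mapping.lookup a z = 0}"

definition ideal_gen :: "'a::comm_ring_1 set \<Rightarrow> 'a set \<Rightarrow> 'a set" where
  "ideal_gen R G = {\<Sum>g\<in>F. c g * g | F c. finite F \<and> F \<subseteq> G \<and> (\<forall>g\<in>F. c g \<in> R)}"

definition monomial_ideal :: "('v, 'k::comm_ring_1) mpoly set \<Rightarrow> bool" where
  "monomial_ideal I \<longleftrightarrow> (\<exists>M. I = ideal_gen UNIV ((\<lambda>a. Poly_Mapping.single a 1) ` M))"

definition vecs :: "'a::zero set \<Rightarrow> nat set \<Rightarrow> (nat \<Rightarrow> 'a) set" where
  "vecs R B = {x. (\<forall>j\<in>B. x j \<in> R) \<and> (\<forall>j. j \<notin> B \<longrightarrow> x j = 0)}"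

definition mat_app :: "nat set \<Rightarrow> nat set \<Rightarrow> (nat \<Rightarrow> nat \<Rightarrow> 'a::comm_ring_1) \<Rightarrow> (nat \<Rightarrow> 'a) \<Rightarrow> (nat \<Rightarrow> 'a)" where
  "mat_app Bc Br M x = (\<lambda>j. if j \<in> Br then (\<Sum>k\<in>Bc. M j k * x k) else 0)"

definition aug :: "(nat \<Rightarrow> 'a::comm_ring_1) \<Rightarrow> nat set \<Rightarrow> (nat \<Rightarrow> 'a) \<Rightarrow> 'a" where
  "aug \<epsilon> B0 x = (\<Sum>j\<in>B0. \<epsilon> j * x j)"

text \<open>F_t \<rightarrow> ... \<rightarrow> F_0 (basis of F_i indexed by B i, map F_i \<rightarrow> F_(i-1) given by A i),
  together with an augmentation F_0 \<rightarrow> R/J (basis element j \<mapsto> class of \<epsilon> j),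
  is a free resolution of R/J over the ring R (a subring of the ambient ring).\<close>
definition is_free_res ::
  "'a::comm_ring_1 set \<Rightarrow> 'a set \<Rightarrow> nat \<Rightarrow> (nat \<Rightarrow> nat set) \<Rightarrow> (nat \<Rightarrow> nat \<Rightarrow> nat \<Rightarrow> 'a) \<Rightarrow> (nat \<Rightarrow> 'a) \<Rightarrow> bool" where
  "is_free_res R J t B A \<epsilon> \<longleftrightarrow>
     (\<forall>i\<le>t. finite (B i))
   \<and> (\<forall>i\<in>{1..t}. \<forall>j\<in>B (i - 1). \<forall>k\<in>B i. A i j k \<in> R)
   \<and> (\<forall>j\<in>B 0. \<epsilon> j \<in> R)
   \<and> (\<forall>a\<in>R. \<exists>x\<in>vecs R (B 0). a - aug \<epsilon> (B 0) x \<in> J)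
   \<and> {x \<in> vecs R (B 0). aug \<epsilon> (B 0) x \<in> J}
       = (if 0 < t then mat_app (B 1) (B 0) (A 1) ` vecs R (B 1) else {\<lambda>_. 0})
   \<and> (\<forall>i\<in>{1..t}. {x \<in> vecs R (B i). mat_app (B i) (B (i - 1)) (A i) x = (\<lambda>_. 0)}
       = (if i < t then mat_app (B (Suc i)) (B i) (A (Suc i)) ` vecs R (B (Suc i)) else {\<lambda>_. 0}))"

text \<open>Minimal: every matrix entry lies in the ideal generated by the variables,
  i.e. has zero constant term.\<close>
definition is_min_free_res ::
  "('v, 'k::comm_ring_1) mpoly set \<Rightarrow> ('v, 'k) mpoly set \<Rightarrow> nat \<Rightarrow> (nat \<Rightarrow> nat set)
     \<Rightarrow> (nat \<Rightarrow> nat \<Rightarrow> nat \<Rightarrow> ('v, 'k) mpoly) \<Rightarrow> (nat \<Rightarrow> ('v, 'k) mpoly) \<Rightarrow> bool" where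
  "is_min_free_res R J t B A \<epsilon> \<longleftrightarrow> is_free_res R J t B A \<epsilon>
     \<and> (\<forall>i\<in>{1..t}. \<forall>j\<in>B (i - 1). \<forall>k\<in>B i. Poly_Mapping.lookup (A i j k) 0 = 0)"

text \<open>N^n-homogeneous bases: basis element k of F_i has multidegree dg i k, and all
  maps (including the augmentation to S/I, whose generator has degree 0) are homogeneous
  of degree 0.\<close>
definition multigraded ::
  "nat \<Rightarrow> (nat \<Rightarrow> nat set) \<Rightarrow> (nat \<Rightarrow> nat \<Rightarrow> nat \<Rightarrow> ('v, 'k::zero) mpoly) \<Rightarrow> (nat \<Rightarrow> ('v, 'k) mpoly)
     \<Rightarrow> (nat \<Rightarrow> nat \<Rightarrow> ('v \<Rightarrow>\<^sub>0 nat)) \<Rightarrow> bool" where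
  "multigraded t B A \<epsilon> dg \<longleftrightarrow>
     (\<forall>i\<in>{1..t}. \<forall>j\<in>B (i - 1). \<forall>k\<in>B i. \<forall>a\<in>Poly_Mapping.keys (A i j k). a + dg (i - 1) j = dg i k)
   \<and> (\<forall>j\<in>B 0. \<forall>a\<in>Poly_Mapping.keys (\<epsilon> j). a = dg 0 j)"

text \<open>Pruning: the surviving basis indices. Step i deletes the columns of
  A_i (rows restricted to the survivors of step i-1) that vanish after setting Z to 0.\<close>
fun pruned_basis :: "'v set \<Rightarrow> (nat \<Rightarrow> nat set) \<Rightarrow> (nat \<Rightarrow> nat \<Rightarrow> nat \<Rightarrow> ('v, 'k::zero) mpoly) \<Rightarrow> nat \<Rightarrow> nat set" where
  "pruned_basis Z B A 0 = B 0"
| "pruned_basis Z B A (Suc i) =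
     {k \<in> B (Suc i). \<exists>j\<in>pruned_basis Z B A i. setZ Z (A (Suc i) j k) \<noteq> 0}"

text \<open>Pruned matrices: A_i with Z set to 0 (restricted to surviving rows/columns via pruned_basis).\<close>
definition pruned_mats :: "'v set \<Rightarrow> (nat \<Rightarrow> nat \<Rightarrow> nat \<Rightarrow> ('v, 'k::zero) mpoly) \<Rightarrow> nat \<Rightarrow> nat \<Rightarrow> nat \<Rightarrow> ('v, 'k) mpoly" where
  "pruned_mats Z A = (\<lambda>i j k. setZ Z (A i j k))"

end

theory Submission imports Defs begin

(* Setting the variables of Z to 0 is the map setZ, which keeps exactly the terms of a polynomial
   whose exponent vector is Z-free; it is a ring retraction of S onto T = polyT Z.  Call a basis
   element of F_i Z-free when its multidegree is.  Homogeneity of the matrices then gives: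
   (a) an entry A_i(j,k) in a Z-free column k is untouched by setZ, and is zero unless its row j
       is Z-free; an entry in a Z-free row and a non-Z-free column is killed by setZ;
   (b) by minimality no column of A_i vanishes and every generator of F_0 is Z-free, so the
       pruning keeps precisely the Z-free basis elements.
   Hence the pruned complex is the span of the Z-free basis vectors with T-coefficients, on
   which it agrees with C; and "apply setZ, forget non-Z-free coordinates" is a retraction of C
   onto it commuting with the differentials.  A retract of an exact complex is exact, which
   yields exactness of the pruning, including at F_0 because monomial ideals are stable under
   setZ.  Minimality survives since setZ preserves constant terms. *)

section \<open>Setting the variables of Z to zero\<close>

definition Z_free :: "'v set \<Rightarrow> ('v \<Rightarrow>\<^sub>0 nat) \<Rightarrow> bool" where
  "Z_free Z a \<longleftrightarrow> (\<forall>z\<in>Z. Poly_Mapping.lookup a z = 0)"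

lemma Z_free_add [simp]: "Z_free Z (a + b) \<longleftrightarrow> Z_free Z a \<and> Z_free Z b"
  by (auto simp: Z_free_def lookup_add)

lemma Z_free_zero [simp]: "Z_free Z 0"
  by (simp add: Z_free_def)

lemma Z_free_UNIV: "Z_free UNIV a \<longleftrightarrow> a = 0"
  by (auto simp: Z_free_def poly_mapping_eqI)

lemma lookup_setZ:
  "Poly_Mapping.lookup (setZ Z f) a = (if Z_free Z a then Poly_Mapping.lookup f a else 0)"
proof -
  have "finite {a. (if Z_free Z a then Poly_Mapping.lookup f a else 0) \<noteq> 0}"
    by (rule finite_subset[OF _ finite_lookup[of f]]) auto
  then show ?thesis unfolding setZ_def Z_free_def by simp
qed

lemma setZ_0 [simp]: "setZ Z 0 = 0"
  by (rule poly_mapping_eqI) (simp add: lookup_setZ)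

lemma setZ_add: "setZ Z (f + g) = setZ Z f + setZ Z g"
  by (rule poly_mapping_eqI) (simp add: lookup_setZ lookup_add)

lemma setZ_diff: "setZ Z (f - g) = setZ Z f - setZ Z (g :: ('v, 'k::ab_group_add) mpoly)"
  by (rule poly_mapping_eqI) (simp add: lookup_setZ lookup_minus)

lemma setZ_sum: "setZ Z (sum f X) = (\<Sum>x\<in>X. setZ Z (f x))"
  by (rule poly_mapping_eqI) (simp add: lookup_setZ lookup_sum)

lemma setZ_id: "(\<And>a. a \<in> Poly_Mapping.keys f \<Longrightarrow> Z_free Z a) \<Longrightarrow> setZ Z f = f"
  by (rule poly_mapping_eqI) (auto simp: lookup_setZ in_keys_iff)

lemma setZ_vanish: "(\<And>a. a \<in> Poly_Mapping.keys f \<Longrightarrow> \<not> Z_free Z a) \<Longrightarrow> setZ Z f = 0"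
  by (rule poly_mapping_eqI) (auto simp: lookup_setZ in_keys_iff)

lemma keys_setZ: "a \<in> Poly_Mapping.keys (setZ Z f) \<Longrightarrow> Z_free Z a \<and> a \<in> Poly_Mapping.keys f"
  by (auto simp: lookup_setZ in_keys_iff split: if_splits)

lemma polyT_iff: "f \<in> polyT Z \<longleftrightarrow> setZ Z f = f"
proof
  assume "f \<in> polyT Z"
  then show "setZ Z f = f" by (intro setZ_id) (auto simp: polyT_def Z_free_def)
next
  assume "setZ Z f = f"
  then show "f \<in> polyT Z" using keys_setZ[of _ Z f] by (auto simp: polyT_def Z_free_def)
qed

lemma setZ_idem [simp]: "setZ Z (setZ Z f) = setZ Z f"
  by (rule setZ_id) (use keys_setZ in blast)

lemma setZ_in_polyT: "setZ Z f \<in> polyT Z"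
  by (simp add: polyT_iff)

text \<open>setZ is multiplicative: split each factor into its Z-free part and the rest; every
  product involving a rest term has only non-Z-free monomials.\<close>
lemma setZ_mult: "setZ Z (f * g) = setZ Z f * setZ Z (g :: ('v, 'k::comm_ring_1) mpoly)"
proof -
  define f' g' where "f' = f - setZ Z f" and "g' = g - setZ Z g"
  have rest: "\<not> Z_free Z a" if "a \<in> Poly_Mapping.keys (h - setZ Z h)" for a and h :: "('v, 'k) mpoly"
    using that by (auto simp: in_keys_iff lookup_minus lookup_setZ split: if_splits)
  have free: "Z_free Z a" if "a \<in> Poly_Mapping.keys (setZ Z h)" for a and h :: "('v, 'k) mpoly"
    using that keys_setZ by blast
  have "f * g = setZ Z f * setZ Z g + (setZ Z f * g' + f' * setZ Z g + f' * g')"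
    by (simp add: f'_def g'_def algebra_simps)
  moreover have "setZ Z (setZ Z f * setZ Z g) = setZ Z f * setZ Z g"
    by (rule setZ_id) (use keys_mult[of "setZ Z f" "setZ Z g"] free in fastforce)
  moreover have "setZ Z (setZ Z f * g') = 0"
    by (rule setZ_vanish) (use keys_mult[of "setZ Z f" g'] rest[of _ g] in \<open>fastforce simp: g'_def\<close>)
  moreover have "setZ Z (f' * setZ Z g) = 0"
    by (rule setZ_vanish) (use keys_mult[of f' "setZ Z g"] rest[of _ f] in \<open>fastforce simp: f'_def\<close>)
  moreover have "setZ Z (f' * g') = 0"
    by (rule setZ_vanish) (use keys_mult[of f' g'] rest[of _ f] in \<open>fastforce simp: f'_def g'_def\<close>)
  ultimately show ?thesis by (simp add: setZ_add)
qed

text \<open>setZ preserves constant terms, and the constant term is multiplicative (it is setZ for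
  Z = all variables).\<close>
lemma const_setZ [simp]: "Poly_Mapping.lookup (setZ Z f) 0 = Poly_Mapping.lookup f 0"
  by (simp add: lookup_setZ Z_free_def)

lemma const_mult:
  "Poly_Mapping.lookup (f * g) 0 = Poly_Mapping.lookup f 0 * Poly_Mapping.lookup (g :: ('v, 'k::comm_ring_1) mpoly) 0"
proof -
  have setZ_UNIV: "setZ UNIV h = Poly_Mapping.single 0 (Poly_Mapping.lookup h 0)" for h :: "('v, 'k) mpoly"
    by (rule poly_mapping_eqI) (auto simp: lookup_setZ Z_free_UNIV lookup_single when_def)
  have "Poly_Mapping.lookup (f * g) 0 = Poly_Mapping.lookup (setZ UNIV (f * g)) 0"
    by simp
  also have "\<dots> = Poly_Mapping.lookup f 0 * Poly_Mapping.lookup g 0"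
    by (simp only: setZ_mult setZ_UNIV mult_single) simp
  finally show ?thesis .
qed

section \<open>Monomial ideals\<close>

lemma ideal_gen_mult: "f \<in> ideal_gen UNIV G \<Longrightarrow> r * f \<in> ideal_gen UNIV G"
proof -
  assume "f \<in> ideal_gen UNIV G"
  then obtain F c where f: "f = (\<Sum>g\<in>F. c g * g)" "finite F" "F \<subseteq> G"
    by (auto simp: ideal_gen_def)
  have "r * f = (\<Sum>g\<in>F. (r * c g) * g)" by (simp add: f sum_distrib_left mult.assoc)
  with f show ?thesis unfolding ideal_gen_def
    by (intro CollectI exI[of _ F] exI[of _ "\<lambda>g. r * c g"]) auto
qed

text \<open>A monomial ideal is stable under setZ: setZ sends each monomial generator to itself or
  to zero.\<close>
lemma monomial_ideal_setZ:
  assumes "monomial_ideal I" "f \<in> I"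
  shows "setZ Z f \<in> (I :: ('v, 'k::comm_ring_1) mpoly set)"
proof -
  from assms(1) obtain M where I: "I = ideal_gen UNIV ((\<lambda>a. Poly_Mapping.single a 1) ` M)"
    by (auto simp: monomial_ideal_def)
  from assms(2) obtain F c where f: "f = (\<Sum>g\<in>F. c g * g)" "finite F"
    "F \<subseteq> (\<lambda>a. Poly_Mapping.single a 1) ` M"
    by (auto simp: ideal_gen_def I)
  define c' where "c' g = (if setZ Z g = g then setZ Z (c g) else 0)" for g
  have "setZ Z (c g * g) = c' g * g" if "g \<in> F" for g
  proof -
    from that f(3) obtain a where g: "g = Poly_Mapping.single a (1::'k)" by auto
    show ?thesis
    proof (cases "Z_free Z a")
      case True
      then have "setZ Z g = g" by (intro setZ_id) (auto simp: g)
      then show ?thesis by (simp add: c'_def setZ_mult)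
    next
      case False
      then have "setZ Z g = 0" by (intro setZ_vanish) (auto simp: g)
      then show ?thesis by (auto simp: c'_def setZ_mult)
    qed
  qed
  then have "setZ Z f = (\<Sum>g\<in>F. c' g * g)"
    unfolding f(1) setZ_sum by (rule sum.cong[OF refl])
  with f(2,3) show ?thesis unfolding I ideal_gen_def by blast
qed

lemma monomial_ideal_setZ_image:
  assumes "monomial_ideal I" "f \<in> polyT Z"
  shows "f \<in> setZ Z ` I \<longleftrightarrow> f \<in> I"
proof
  assume "f \<in> setZ Z ` I"
  then show "f \<in> I" using monomial_ideal_setZ[OF assms(1)] by auto
next
  assume "f \<in> I"
  moreover have "setZ Z f = f" using assms(2) by (simp add: polyT_iff)
  ultimately show "f \<in> setZ Z ` I" by (metis image_eqI)
qed

lemma vecs_mono: "B \<subseteq> B' \<Longrightarrow> vecs R B \<subseteq> vecs UNIV B'"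
  by (auto simp: vecs_def)

lemma const_mat_app:
  assumes "\<And>k. k \<in> Bc \<Longrightarrow> Poly_Mapping.lookup (M j k) 0 = 0"
  shows "Poly_Mapping.lookup (mat_app Bc Br (M :: nat \<Rightarrow> nat \<Rightarrow> ('v, 'k::comm_ring_1) mpoly) y j) 0 = 0"
  using assms by (simp add: mat_app_def lookup_sum const_mult)

definition proj_vec :: "'v set \<Rightarrow> nat set \<Rightarrow> (nat \<Rightarrow> ('v, 'k::zero) mpoly) \<Rightarrow> nat \<Rightarrow> ('v, 'k) mpoly" where
  "proj_vec Z P x = (\<lambda>k. if k \<in> P then setZ Z (x k) else 0)"

lemma proj_vec_in: "proj_vec Z P x \<in> vecs (polyT Z) P"
  by (auto simp: proj_vec_def vecs_def setZ_in_polyT)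

lemma proj_vec_id: "x \<in> vecs (polyT Z) P \<Longrightarrow> proj_vec Z P x = x"
  by (auto simp: proj_vec_def vecs_def polyT_iff)

lemma setZ_aug:
  assumes "\<And>j. j \<in> B0 \<Longrightarrow> \<epsilon> j \<in> polyT Z"
  shows "setZ Z (aug \<epsilon> B0 x) = aug \<epsilon> B0 (proj_vec Z B0 x)"
  unfolding aug_def setZ_sum setZ_mult
  using assms by (intro sum.cong) (auto simp: proj_vec_def polyT_iff)

section \<open>Exactness of retracts\<close>

text \<open>If K is the image of d, then
  K restricted to W' is the image of p.  This is exactness of a retract of an exact complex,
  at one spot.\<close>
lemma exact_retract:
  assumes sub: "V' \<subseteq> V"
    and agree: "\<And>y. y \<in> V' \<Longrightarrow> d y = p y"
    and q_in: "\<And>y. y \<in> V \<Longrightarrow> q y \<in> V'" and q_id: "\<And>y. y \<in> V' \<Longrightarrow> q y = y"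
    and r_in: "\<And>x. r x \<in> W'" and r_id: "\<And>x. x \<in> W' \<Longrightarrow> r x = x"
    and chain: "\<And>y. y \<in> V \<Longrightarrow> r (d y) = p (q y)"
    and exact: "K = d ` V"
  shows "K \<inter> W' = p ` V'"
proof
  show "K \<inter> W' \<subseteq> p ` V'"
  proof
    fix x assume "x \<in> K \<inter> W'"
    then obtain y where y: "y \<in> V" "x = d y" and x: "x \<in> W'" using exact by auto
    have "x = r (d y)" using r_id[OF x] y(2) by simp
    also have "\<dots> = p (q y)" using chain[OF y(1)] .
    finally show "x \<in> p ` V'" using q_in[OF y(1)] by blast
  qed
next
  show "p ` V' \<subseteq> K \<inter> W'"
  proof
    fix x assume "x \<in> p ` V'"
    then obtain y where y: "y \<in> V'" "x = p y" by auto
    then have yV: "y \<in> V" using sub by blast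
    have "x = d y" using agree[OF y(1)] y(2) by simp
    then have "x \<in> K" using exact yV by blast
    moreover have "x = r (d y)" using chain[OF yV] q_id[OF y(1)] y(2) by simp
    ultimately show "x \<in> K \<inter> W'" using r_in by simp
  qed
qed

lemma is_free_res_basis_cong:
  assumes same: "\<And>i. i \<le> t \<Longrightarrow> B' i = B i"
  shows "is_free_res R J t B' A \<epsilon> \<longleftrightarrow> is_free_res R J t B A \<epsilon>"
proof -
  have B0: "B' 0 = B 0" and B1: "0 < t \<Longrightarrow> B' 1 = B 1" using same by simp_all
  have "(\<forall>i\<le>t. finite (B' i)) \<longleftrightarrow> (\<forall>i\<le>t. finite (B i))"
    using same by auto
  moreover have "(\<forall>i\<in>{1..t}. \<forall>j\<in>B' (i - 1). \<forall>k\<in>B' i. A i j k \<in> R)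
      \<longleftrightarrow> (\<forall>i\<in>{1..t}. \<forall>j\<in>B (i - 1). \<forall>k\<in>B i. A i j k \<in> R)"
    using same by (intro ball_cong refl) auto
  moreover have "{x \<in> vecs R (B' 0). aug \<epsilon> (B' 0) x \<in> J}
       = (if 0 < t then mat_app (B' 1) (B' 0) (A 1) ` vecs R (B' 1) else {\<lambda>_. 0})
     \<longleftrightarrow> {x \<in> vecs R (B 0). aug \<epsilon> (B 0) x \<in> J}
       = (if 0 < t then mat_app (B 1) (B 0) (A 1) ` vecs R (B 1) else {\<lambda>_. 0})"
    using B0 B1 by (cases "0 < t") simp_all
  moreover have "(\<forall>i\<in>{1..t}. {x \<in> vecs R (B' i). mat_app (B' i) (B' (i - 1)) (A i) x = (\<lambda>_. 0)}
       = (if i < t then mat_app (B' (Suc i)) (B' i) (A (Suc i)) ` vecs R (B' (Suc i)) else {\<lambda>_. 0}))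
    \<longleftrightarrow> (\<forall>i\<in>{1..t}. {x \<in> vecs R (B i). mat_app (B i) (B (i - 1)) (A i) x = (\<lambda>_. 0)}
       = (if i < t then mat_app (B (Suc i)) (B i) (A (Suc i)) ` vecs R (B (Suc i)) else {\<lambda>_. 0}))"
    (is "(\<forall>i\<in>{1..t}. ?P i) \<longleftrightarrow> (\<forall>i\<in>{1..t}. ?Q i)")
  proof (intro ball_cong refl)
    fix i assume "i \<in> {1..t}"
    then have "B' (i - 1) = B (i - 1)" "B' i = B i" "i < t \<Longrightarrow> B' (Suc i) = B (Suc i)"
      using same by auto
    then show "?P i \<longleftrightarrow> ?Q i" by (cases "i < t") simp_all
  qed
  ultimately show ?thesis unfolding is_free_res_def B0 by (simp only:)
qed

lemma is_min_free_res_basis_cong: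
  assumes "\<And>i. i \<le> t \<Longrightarrow> B' i = B i"
  shows "is_min_free_res R J t B' A \<epsilon> \<longleftrightarrow> is_min_free_res R J t B A \<epsilon>"
proof -
  have "(\<forall>i\<in>{1..t}. \<forall>j\<in>B' (i - 1). \<forall>k\<in>B' i. Poly_Mapping.lookup (A i j k) 0 = 0)
      \<longleftrightarrow> (\<forall>i\<in>{1..t}. \<forall>j\<in>B (i - 1). \<forall>k\<in>B i. Poly_Mapping.lookup (A i j k) 0 = 0)"
    using assms by (intro ball_cong refl) auto
  moreover have "is_free_res R J t B' A \<epsilon> \<longleftrightarrow> is_free_res R J t B A \<epsilon>"
    by (rule is_free_res_basis_cong) (use assms in auto)
  ultimately show ?thesis unfolding is_min_free_res_def by (simp only:)
qed

section \<open>Pruning a multigraded minimal free resolution\<close>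

definition incoming ::
  "'a::comm_ring_1 set \<Rightarrow> nat \<Rightarrow> (nat \<Rightarrow> nat set) \<Rightarrow> (nat \<Rightarrow> nat \<Rightarrow> nat \<Rightarrow> 'a) \<Rightarrow> nat \<Rightarrow> (nat \<Rightarrow> 'a) set" where
  "incoming R t B A i =
     (if i < t then mat_app (B (Suc i)) (B i) (A (Suc i)) ` vecs R (B (Suc i)) else {\<lambda>_. 0})"

locale multigraded_min_res =
  fixes I :: "('v, 'k::comm_ring_1) mpoly set"
    and Z :: "'v set"
    and t :: nat
    and B :: "nat \<Rightarrow> nat set"
    and A :: "nat \<Rightarrow> nat \<Rightarrow> nat \<Rightarrow> ('v, 'k) mpoly"
    and \<epsilon> :: "nat \<Rightarrow> ('v, 'k) mpoly"
    and dg :: "nat \<Rightarrow> nat \<Rightarrow> ('v \<Rightarrow>\<^sub>0 nat)"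
  assumes monomial: "monomial_ideal I"
    and resolution: "is_min_free_res UNIV I t B A \<epsilon>"
    and graded: "multigraded t B A \<epsilon> dg"
begin

lemma basis_finite: "i \<le> t \<Longrightarrow> finite (B i)"
  using resolution by (simp add: is_min_free_res_def is_free_res_def)

lemma aug_surj: "\<exists>x\<in>vecs UNIV (B 0). a - aug \<epsilon> (B 0) x \<in> I"
  using resolution by (simp add: is_min_free_res_def is_free_res_def)

lemma exact_0: "{x \<in> vecs UNIV (B 0). aug \<epsilon> (B 0) x \<in> I} = incoming UNIV t B A 0"
  using resolution by (simp add: is_min_free_res_def is_free_res_def incoming_def)

lemma exact_i:
  "i \<in> {1..t} \<Longrightarrow> {x \<in> vecs UNIV (B i). mat_app (B i) (B (i - 1)) (A i) x = (\<lambda>_. 0)} = incoming UNIV t B A i"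
  using resolution by (simp add: is_min_free_res_def is_free_res_def incoming_def)

lemma entry_const:
  "i \<in> {1..t} \<Longrightarrow> j \<in> B (i - 1) \<Longrightarrow> k \<in> B i \<Longrightarrow> Poly_Mapping.lookup (A i j k) 0 = 0"
  using resolution by (simp add: is_min_free_res_def)

lemma entry_homogeneous:
  "i \<in> {1..t} \<Longrightarrow> j \<in> B (i - 1) \<Longrightarrow> k \<in> B i \<Longrightarrow> a \<in> Poly_Mapping.keys (A i j k)
     \<Longrightarrow> a + dg (i - 1) j = dg i k"
  using graded by (simp add: multigraded_def)

lemma aug_homogeneous: "j \<in> B 0 \<Longrightarrow> a \<in> Poly_Mapping.keys (\<epsilon> j) \<Longrightarrow> a = dg 0 j"
  using graded by (simp add: multigraded_def)

lemma incoming_const: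
  assumes "x \<in> incoming UNIV t B A i" "k \<in> B i"
  shows "Poly_Mapping.lookup (x k) 0 = 0"
proof (cases "i < t")
  case True
  with assms(1) obtain y where "x = mat_app (B (Suc i)) (B i) (A (Suc i)) y"
    by (auto simp: incoming_def)
  with True assms(2) show ?thesis by (simp add: const_mat_app entry_const)
qed (use assms in \<open>simp add: incoming_def\<close>)

text \<open>Hence no column of a matrix A_i vanishes: otherwise the basis vector would be a cycle.\<close>
lemma column_nonzero:
  assumes i: "i \<in> {1..t}" and k: "k \<in> B i"
  shows "\<exists>j\<in>B (i - 1). A i j k \<noteq> 0"
proof (rule ccontr)
  assume "\<not> ?thesis"
  then have zero: "\<And>j. j \<in> B (i - 1) \<Longrightarrow> A i j k = 0" by auto
  define e where "e = (\<lambda>l. if l = k then 1 else (0 :: ('v, 'k) mpoly))"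
  have "e \<in> vecs UNIV (B i)" using k by (auto simp: vecs_def e_def)
  moreover have "mat_app (B i) (B (i - 1)) (A i) e = (\<lambda>_. 0)"
    using basis_finite i k zero by (auto simp: mat_app_def e_def fun_eq_iff if_distrib cong: if_cong)
  ultimately have "e \<in> incoming UNIV t B A i" using exact_i[OF i] by blast
  from incoming_const[OF this k] show False by (simp add: e_def)
qed

text \<open>Every generator of F_0 is Z-free: if dg 0 j were not, \<epsilon> j would have no constant term,
  and e_j - \<epsilon> j x (with 1 - aug x \<in> I) would be a cycle with a unit coordinate.\<close>
lemma generator_Z_free:
  assumes j: "j \<in> B 0" shows "Z_free Z (dg 0 j)"
proof (rule ccontr)
  assume not_free: "\<not> Z_free Z (dg 0 j)"
  obtain x where x: "x \<in> vecs UNIV (B 0)" "1 - aug \<epsilon> (B 0) x \<in> I"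
    using aug_surj[of 1] by blast
  define w where "w = (\<lambda>l. (if l = j then 1 else 0) - \<epsilon> j * x l)"
  have w: "w \<in> vecs UNIV (B 0)" using x(1) j by (auto simp: vecs_def w_def)
  have "aug \<epsilon> (B 0) w
      = (\<Sum>l\<in>B 0. (if l = j then \<epsilon> l else 0)) - (\<Sum>l\<in>B 0. \<epsilon> j * (\<epsilon> l * x l))"
    unfolding aug_def w_def
    by (simp add: right_diff_distrib sum_subtractf mult.left_commute) (rule sum.cong, auto)
  also have "\<dots> = \<epsilon> j * (1 - aug \<epsilon> (B 0) x)"
    using basis_finite[of 0] j by (simp add: aug_def sum_distrib_left right_diff_distrib)
  finally have "aug \<epsilon> (B 0) w \<in> I"
    using monomial x(2) ideal_gen_mult by (auto simp: monomial_ideal_def)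
  with w have "w \<in> incoming UNIV t B A 0" using exact_0 by blast
  from incoming_const[OF this j] have "Poly_Mapping.lookup (w j) 0 = 0" .
  moreover have "Poly_Mapping.lookup (\<epsilon> j) 0 = 0"
    using aug_homogeneous[OF j, of 0] not_free Z_free_zero[of Z] by (metis in_keys_iff)
  ultimately show False by (simp add: w_def lookup_minus const_mult)
qed

lemma aug_in_polyT: "j \<in> B 0 \<Longrightarrow> \<epsilon> j \<in> polyT Z"
  unfolding polyT_iff by (rule setZ_id) (use aug_homogeneous generator_Z_free in blast)

lemma entry_setZ_id:
  "i \<in> {1..t} \<Longrightarrow> j \<in> B (i - 1) \<Longrightarrow> k \<in> B i \<Longrightarrow> Z_free Z (dg i k) \<Longrightarrow> setZ Z (A i j k) = A i j k"
  by (rule setZ_id) (metis entry_homogeneous Z_free_add)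

lemma entry_row_Z_free:
  "i \<in> {1..t} \<Longrightarrow> j \<in> B (i - 1) \<Longrightarrow> k \<in> B i \<Longrightarrow> Z_free Z (dg i k) \<Longrightarrow> A i j k \<noteq> 0
     \<Longrightarrow> Z_free Z (dg (i - 1) j)"
proof -
  assume "i \<in> {1..t}" "j \<in> B (i - 1)" "k \<in> B i" "Z_free Z (dg i k)" "A i j k \<noteq> 0"
  moreover obtain a where "a \<in> Poly_Mapping.keys (A i j k)"
    using \<open>A i j k \<noteq> 0\<close> by (metis ex_in_conv keys_eq_empty)
  ultimately show ?thesis using entry_homogeneous[of i j k a] by (metis Z_free_add)
qed

lemma entry_setZ_vanish:
  "i \<in> {1..t} \<Longrightarrow> j \<in> B (i - 1) \<Longrightarrow> k \<in> B i \<Longrightarrow> Z_free Z (dg (i - 1) j) \<Longrightarrow> \<not> Z_free Z (dg i k)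
     \<Longrightarrow> setZ Z (A i j k) = 0"
  by (rule setZ_vanish) (metis entry_homogeneous Z_free_add)

definition free_basis :: "nat \<Rightarrow> nat set" where
  "free_basis i = {k \<in> B i. Z_free Z (dg i k)}"

lemma free_basis_sub: "free_basis i \<subseteq> B i"
  by (auto simp: free_basis_def)

lemma free_basis_0: "free_basis 0 = B 0"
  using generator_Z_free by (auto simp: free_basis_def)

lemma pruned_basis_eq: "i \<le> t \<Longrightarrow> pruned_basis Z B A i = free_basis i"
proof (induction i)
  case 0
  then show ?case using free_basis_0 by simp
next
  case (Suc i)
  then have IH: "pruned_basis Z B A i = free_basis i" and iS: "Suc i \<in> {1..t}" by simp_all
  have "k \<in> B (Suc i) \<and> (\<exists>j\<in>free_basis i. setZ Z (A (Suc i) j k) \<noteq> 0) \<longleftrightarrow> k \<in> free_basis (Suc i)" for k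
  proof
    assume "k \<in> B (Suc i) \<and> (\<exists>j\<in>free_basis i. setZ Z (A (Suc i) j k) \<noteq> 0)"
    then obtain j where k: "k \<in> B (Suc i)" and j: "j \<in> B i" "Z_free Z (dg i j)"
      and nz: "setZ Z (A (Suc i) j k) \<noteq> 0"
      unfolding free_basis_def by blast
    have "Z_free Z (dg (Suc i) k)"
      using entry_setZ_vanish[OF iS, of j k] j k nz by fastforce
    with k show "k \<in> free_basis (Suc i)" by (simp add: free_basis_def)
  next
    assume "k \<in> free_basis (Suc i)"
    then have k: "k \<in> B (Suc i)" and free: "Z_free Z (dg (Suc i) k)" by (simp_all add: free_basis_def)
    obtain j where j: "j \<in> B i" and nz: "A (Suc i) j k \<noteq> 0"
      using column_nonzero[OF iS k] by auto
    have "Z_free Z (dg i j)" using entry_row_Z_free[OF iS, of j k] j k free nz by simp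
    then have "j \<in> free_basis i" using j by (simp add: free_basis_def)
    moreover have "setZ Z (A (Suc i) j k) \<noteq> 0" using entry_setZ_id[OF iS, of j k] j k free nz by simp
    ultimately show "k \<in> B (Suc i) \<and> (\<exists>j\<in>free_basis i. setZ Z (A (Suc i) j k) \<noteq> 0)"
      using k by blast
  qed
  then show ?case using IH by auto
qed

lemma pruned_agrees:
  assumes i: "i \<in> {1..t}" and x: "x \<in> vecs R (free_basis i)"
  shows "mat_app (free_basis i) (free_basis (i - 1)) (pruned_mats Z A i) x = mat_app (B i) (B (i - 1)) (A i) x"
proof
  fix j
  have x0: "\<And>k. k \<notin> free_basis i \<Longrightarrow> x k = 0" using x by (auto simp: vecs_def)
  show "mat_app (free_basis i) (free_basis (i - 1)) (pruned_mats Z A i) x j = mat_app (B i) (B (i - 1)) (A i) x j"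
  proof (cases "j \<in> free_basis (i - 1)")
    case True
    then have j: "j \<in> B (i - 1)" by (auto simp: free_basis_def)
    have "(\<Sum>k\<in>free_basis i. setZ Z (A i j k) * x k) = (\<Sum>k\<in>B i. A i j k * x k)"
      by (rule sum.mono_neutral_cong_left[OF basis_finite free_basis_sub])
        (use i x0 entry_setZ_id[OF i j] in \<open>auto simp: free_basis_def\<close>)
    then show ?thesis using True j by (simp add: mat_app_def pruned_mats_def)
  next
    case False
    have "A i j k * x k = 0" if "j \<in> B (i - 1)" "k \<in> B i" for k
      using False that x0 entry_row_Z_free[OF i] by (fastforce simp: free_basis_def)
    then show ?thesis using False by (simp add: mat_app_def)
  qed
qed

lemma proj_chain:
  assumes i: "i \<in> {1..t}"
  shows "proj_vec Z (free_basis (i - 1)) (mat_app (B i) (B (i - 1)) (A i) y)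
       = mat_app (free_basis i) (free_basis (i - 1)) (pruned_mats Z A i) (proj_vec Z (free_basis i) y)"
proof
  fix j
  show "proj_vec Z (free_basis (i - 1)) (mat_app (B i) (B (i - 1)) (A i) y) j
      = mat_app (free_basis i) (free_basis (i - 1)) (pruned_mats Z A i) (proj_vec Z (free_basis i) y) j"
  proof (cases "j \<in> free_basis (i - 1)")
    case True
    then have j: "j \<in> B (i - 1)" and free: "Z_free Z (dg (i - 1) j)" by (auto simp: free_basis_def)
    have "(\<Sum>k\<in>free_basis i. setZ Z (A i j k) * setZ Z (y k)) = (\<Sum>k\<in>B i. setZ Z (A i j k) * setZ Z (y k))"
      by (rule sum.mono_neutral_left[OF basis_finite free_basis_sub])
        (use i entry_setZ_vanish[OF i j _ free] in \<open>auto simp: free_basis_def\<close>)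
    then show ?thesis using True j
      by (simp add: proj_vec_def mat_app_def pruned_mats_def setZ_sum setZ_mult)
  qed (simp add: proj_vec_def mat_app_def)
qed

lemma pruned_exact:
  assumes "i \<le> t"
    and cycles: "K' = K \<inter> vecs (polyT Z) (free_basis i)" "K = incoming UNIV t B A i"
  shows "K' = incoming (polyT Z) t free_basis (pruned_mats Z A) i"
proof (cases "i < t")
  case True
  then have iS: "Suc i \<in> {1..t}" by simp
  have "K \<inter> vecs (polyT Z) (free_basis i)
      = mat_app (free_basis (Suc i)) (free_basis i) (pruned_mats Z A (Suc i)) ` vecs (polyT Z) (free_basis (Suc i))"
    by (rule exact_retract[where q = "proj_vec Z (free_basis (Suc i))" and r = "proj_vec Z (free_basis i)"])
      (use pruned_agrees[OF iS] proj_chain[OF iS] vecs_mono[OF free_basis_sub, of "polyT Z" "Suc i"] True cycles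
        in \<open>auto simp: proj_vec_in proj_vec_id incoming_def\<close>)
  then show ?thesis using True cycles by (simp add: incoming_def)
qed (use cycles in \<open>auto simp: incoming_def vecs_def polyT_iff\<close>)

lemma aug_polyT:
  assumes "x \<in> vecs (polyT Z) (B 0)"
  shows "aug \<epsilon> (B 0) x \<in> polyT Z"
proof -
  have "setZ Z (aug \<epsilon> (B 0) x) = aug \<epsilon> (B 0) (proj_vec Z (B 0) x)"
    by (rule setZ_aug) (rule aug_in_polyT)
  then show ?thesis using proj_vec_id[OF assms] polyT_iff by metis
qed

lemma pruned_aug_surj:
  assumes a: "a \<in> polyT Z"
  shows "\<exists>x\<in>vecs (polyT Z) (B 0). a - aug \<epsilon> (B 0) x \<in> setZ Z ` I"
proof -
  obtain x where x: "a - aug \<epsilon> (B 0) x \<in> I" using aug_surj by blast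
  have "setZ Z (aug \<epsilon> (B 0) x) = aug \<epsilon> (B 0) (proj_vec Z (B 0) x)"
    by (rule setZ_aug) (rule aug_in_polyT)
  moreover have "setZ Z a = a" using a polyT_iff by blast
  ultimately have "setZ Z (a - aug \<epsilon> (B 0) x) = a - aug \<epsilon> (B 0) (proj_vec Z (B 0) x)"
    by (simp only: setZ_diff)
  then have "a - aug \<epsilon> (B 0) (proj_vec Z (B 0) x) \<in> setZ Z ` I" using x by (metis image_eqI)
  with proj_vec_in show ?thesis by blast
qed

text \<open>The cycles of the pruned complex are the cycles of C that are T-vectors on the Z-free
  basis; at F_0 this uses that I is a monomial ideal.\<close>
lemma pruned_cycles_0:
  "{x \<in> vecs (polyT Z) (B 0). aug \<epsilon> (B 0) x \<in> setZ Z ` I}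
     = {x \<in> vecs UNIV (B 0). aug \<epsilon> (B 0) x \<in> I} \<inter> vecs (polyT Z) (B 0)"
proof (intro set_eqI)
  fix x
  show "x \<in> {x \<in> vecs (polyT Z) (B 0). aug \<epsilon> (B 0) x \<in> setZ Z ` I}
    \<longleftrightarrow> x \<in> {x \<in> vecs UNIV (B 0). aug \<epsilon> (B 0) x \<in> I} \<inter> vecs (polyT Z) (B 0)"
  proof (cases "x \<in> vecs (polyT Z) (B 0)")
    case True
    moreover have "x \<in> vecs UNIV (B 0)" using True vecs_mono[of "B 0" "B 0" "polyT Z"] by blast
    ultimately show ?thesis using monomial_ideal_setZ_image[OF monomial aug_polyT[OF True]] by simp
  qed simp
qed

lemma pruned_cycles_i:
  assumes i: "i \<in> {1..t}"
  shows "{x \<in> vecs (polyT Z) (free_basis i). mat_app (free_basis i) (free_basis (i - 1)) (pruned_mats Z A i) x = (\<lambda>_. 0)}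
     = {x \<in> vecs UNIV (B i). mat_app (B i) (B (i - 1)) (A i) x = (\<lambda>_. 0)} \<inter> vecs (polyT Z) (free_basis i)"
proof (intro set_eqI)
  fix x
  show "x \<in> {x \<in> vecs (polyT Z) (free_basis i). mat_app (free_basis i) (free_basis (i - 1)) (pruned_mats Z A i) x = (\<lambda>_. 0)}
    \<longleftrightarrow> x \<in> {x \<in> vecs UNIV (B i). mat_app (B i) (B (i - 1)) (A i) x = (\<lambda>_. 0)} \<inter> vecs (polyT Z) (free_basis i)"
  proof (cases "x \<in> vecs (polyT Z) (free_basis i)")
    case True
    moreover have "x \<in> vecs UNIV (B i)" using True vecs_mono[OF free_basis_sub, of "polyT Z" i] by blast
    ultimately show ?thesis using pruned_agrees[OF i True] by simp
  qed simp
qed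

theorem pruned_min_free_res:
  "is_min_free_res (polyT Z) (setZ Z ` I) t free_basis (pruned_mats Z A) \<epsilon>"
  unfolding is_min_free_res_def is_free_res_def free_basis_0
proof (intro conjI ballI allI impI)
  show "finite (free_basis i)" if "i \<le> t" for i
    using that basis_finite free_basis_sub finite_subset by blast
  show "pruned_mats Z A i j k \<in> polyT Z" for i j k
    by (simp add: pruned_mats_def setZ_in_polyT)
  show "\<epsilon> j \<in> polyT Z" if "j \<in> B 0" for j
    using that by (rule aug_in_polyT)
  show "Poly_Mapping.lookup (pruned_mats Z A i j k) 0 = 0"
    if "i \<in> {1..t}" "j \<in> free_basis (i - 1)" "k \<in> free_basis i" for i j k
    using that entry_const[of i j k] free_basis_sub[of "i - 1"] free_basis_sub[of i]
    by (auto simp: pruned_mats_def)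
  show "\<exists>x\<in>vecs (polyT Z) (B 0). a - aug \<epsilon> (B 0) x \<in> setZ Z ` I" if "a \<in> polyT Z" for a
    using that by (rule pruned_aug_surj)
  have "{x \<in> vecs (polyT Z) (B 0). aug \<epsilon> (B 0) x \<in> setZ Z ` I}
      = incoming (polyT Z) t free_basis (pruned_mats Z A) 0"
    by (rule pruned_exact[OF _ _ exact_0]) (simp_all add: pruned_cycles_0 free_basis_0)
  then show "{x \<in> vecs (polyT Z) (B 0). aug \<epsilon> (B 0) x \<in> setZ Z ` I}
    = (if 0 < t then mat_app (free_basis 1) (B 0) (pruned_mats Z A 1) ` vecs (polyT Z) (free_basis 1)
       else {\<lambda>_. 0})"
    by (simp add: incoming_def free_basis_0)
  fix i assume i: "i \<in> {1..t}"
  have "{x \<in> vecs (polyT Z) (free_basis i). mat_app (free_basis i) (free_basis (i - 1)) (pruned_mats Z A i) x = (\<lambda>_. 0)}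
      = incoming (polyT Z) t free_basis (pruned_mats Z A) i"
    by (rule pruned_exact[OF _ pruned_cycles_i[OF i] exact_i[OF i]]) (use i in simp)
  then show "{x \<in> vecs (polyT Z) (free_basis i). mat_app (free_basis i) (free_basis (i - 1)) (pruned_mats Z A i) x = (\<lambda>_. 0)}
    = (if i < t then mat_app (free_basis (Suc i)) (free_basis i) (pruned_mats Z A (Suc i)) ` vecs (polyT Z) (free_basis (Suc i))
       else {\<lambda>_. 0})"
    by (simp add: incoming_def)
qed

end

theorem mainTheorem2:
  fixes I :: "('v::finite, 'k::comm_ring_1) mpoly set"
    and Z :: "'v set"
    and t :: nat
    and B :: "nat \<Rightarrow> nat set"
    and A :: "nat \<Rightarrow> nat \<Rightarrow> nat \<Rightarrow> ('v, 'k) mpoly"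
    and \<epsilon> :: "nat \<Rightarrow> ('v, 'k) mpoly"
    and dg :: "nat \<Rightarrow> nat \<Rightarrow> ('v \<Rightarrow>\<^sub>0 nat)"
  assumes K_field_or_Z:
      "(\<forall>x::'k. x \<noteq> 0 \<longrightarrow> x dvd 1)
       \<or> (\<exists>\<phi>::'k \<Rightarrow> int. bij \<phi> \<and> (\<forall>x y. \<phi> (x + y) = \<phi> x + \<phi> y \<and> \<phi> (x * y) = \<phi> x * \<phi> y) \<and> \<phi> 1 = 1)"
    and "monomial_ideal I"
    and "is_min_free_res UNIV I t B A \<epsilon>"
    and "multigraded t B A \<epsilon> dg"
  shows "\<exists>\<epsilon>'. is_min_free_res (polyT Z) (setZ Z ` I) t (pruned_basis Z B A) (pruned_mats Z A) \<epsilon>'"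
proof -
  interpret multigraded_min_res I Z t B A \<epsilon> dg
    using assms(2-4) by unfold_locales
  have "is_min_free_res (polyT Z) (setZ Z ` I) t (pruned_basis Z B A) (pruned_mats Z A) \<epsilon>
      \<longleftrightarrow> is_min_free_res (polyT Z) (setZ Z ` I) t free_basis (pruned_mats Z A) \<epsilon>"
    by (rule is_min_free_res_basis_cong) (rule pruned_basis_eq)
  with pruned_min_free_res show ?thesis by (intro exI[of _ \<epsilon>]) (simp only:)
qed

end
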